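(* Let $\theta$ be a universal formula in the first-order language with equality over a single binary relation symbol $R$, using only the variables $x,y,z$. If $(P,Z)\models\theta[w]$ for every assignment $w:\{x,y,z\}\to P$, then $(Q,T)\models\theta[v]$ for every assignment $v:\{x,y,z\}\to Q$.
   Context: $(P,Z)$ is the "pentagon": $P=\{0,1,2,3,4\}$, $Z=\{(i,j): i<5,\ j\equiv i\pm1 \pmod 5\}$. $(Q,T)$ is the "square": $Q=\{0,1,2,3\}$, $T=\{(i,j): i<4,\ j\equiv i\pm1 \pmod 4\}$; $R$ is interpreted by $Z$, resp. $T$. A universal formula is one built from atomic formulas ($Ruv$ or $u=v$, $u,v$ variables) and negations of atomic formulas using only conjunction, disjunction and universal quantification. "Using only the variables $x,y,z$" means every variable occurring, free or bound, is among $x,y,z$ (variables may be requantified). *)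

theory Defs
  imports Main
begin

datatype var = Vx | Vy | Vz

datatype ufm =
    RelA var var
  | EqA var var
  | NRelA var var
  | NEqA var var
  | Conj ufm ufm
  | Disj ufm ufm
  | Forall var ufm

fun sat :: "'a set \<Rightarrow> ('a \<Rightarrow> 'a \<Rightarrow> bool) \<Rightarrow> ufm \<Rightarrow> (var \<Rightarrow> 'a) \<Rightarrow> bool" where
  "sat D E (RelA u v) w = E (w u) (w v)"
| "sat D E (EqA u v) w = (w u = w v)"
| "sat D E (NRelA u v) w = (\<not> E (w u) (w v))"
| "sat D E (NEqA u v) w = (w u \<noteq> w v)"
| "sat D E (Conj f g) w = (sat D E f w \<and> sat D E g w)"
| "sat D E (Disj f g) w = (sat D E f w \<or> sat D E g w)"
| "sat D E (Forall v f) w = (\<forall>a\<in>D. sat D E f (w(v := a)))"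

definition pentP :: "nat set" where "pentP = {0..<5}"
definition pentZ :: "nat \<Rightarrow> nat \<Rightarrow> bool" where
  "pentZ i j = (i < 5 \<and> j < 5 \<and> (j = (i + 1) mod 5 \<or> i = (j + 1) mod 5))"

definition sqQ :: "nat set" where "sqQ = {0..<4}"
definition sqT :: "nat \<Rightarrow> nat \<Rightarrow> bool" where
  "sqT i j = (i < 4 \<and> j < 4 \<and> (j = (i + 1) mod 4 \<or> i = (j + 1) mod 4))"

end

theory Submission
  imports Defs
begin

text \<open>Universal formulas are preserved backwards along a ``forth'' system: if every assignment
  into the square is matched by an assignment into the pentagon with the same atomic type, and
  such matched pairs can be re-matched after changing the value of any one variable, then by
  induction on the formula truth in the pentagon transfers to the square. With only three
  variables, changing one variable leaves a configuration of at most two points, so it suffices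
  that every partial isomorphism from at most two points of the square into the pentagon extends
  to any further point of the square, which is a finite check.\<close>

definition same_atomic_type ::
    "('a \<Rightarrow> 'a \<Rightarrow> bool) \<Rightarrow> ('b \<Rightarrow> 'b \<Rightarrow> bool) \<Rightarrow> ('v \<Rightarrow> 'a) \<Rightarrow> ('v \<Rightarrow> 'b) \<Rightarrow> bool" where
  "same_atomic_type E E' v w \<longleftrightarrow>
     (\<forall>i j. (v i = v j \<longleftrightarrow> w i = w j) \<and> (E (v i) (v j) \<longleftrightarrow> E' (w i) (w j)))"

lemma sat_transfer_forth:
  assumes atomic: "\<And>v w. S v w \<Longrightarrow> same_atomic_type E E' v w"
    and forth: "\<And>v w u b. S v w \<Longrightarrow> b \<in> D \<Longrightarrow> \<exists>a\<in>D'. S (v(u := b)) (w(u := a))"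
    and "S v w" "sat D' E' \<theta> w"
  shows "sat D E \<theta> v"
  using assms(3,4)
proof (induction \<theta> arbitrary: v w)
  case (Forall u f)
  show ?case
  proof (simp, intro ballI)
    fix b assume "b \<in> D"
    then obtain a where "a \<in> D'" and S: "S (v(u := b)) (w(u := a))"
      using forth Forall.prems(1) by blast
    with Forall.prems(2) have "sat D' E' f (w(u := a))" by simp
    with S show "sat D E f (v(u := b))" by (rule Forall.IH)
  qed
qed (auto dest: atomic simp: same_atomic_type_def)

lemma same_atomic_type_update:
  assumes vw: "same_atomic_type E E' v w"
    and "symp E" "symp E'" "irreflp E" "irreflp E'"
    and new: "\<And>t. t \<noteq> u \<Longrightarrow> (b = v t \<longleftrightarrow> a = w t) \<and> (E b (v t) \<longleftrightarrow> E' a (w t))"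
  shows "same_atomic_type E E' (v(u := b)) (w(u := a))"
proof -
  have new': "(v t = b \<longleftrightarrow> w t = a) \<and> (E (v t) b \<longleftrightarrow> E' (w t) a)" if "t \<noteq> u" for t
    using new[OF that] \<open>symp E\<close> \<open>symp E'\<close> by (metis sympD)
  have loop: "\<not> E b b" "\<not> E' a a"
    using \<open>irreflp E\<close> \<open>irreflp E'\<close> by (auto dest: irreflpD)
  show ?thesis
    unfolding same_atomic_type_def
  proof (intro allI)
    fix i j
    show "((v(u := b)) i = (v(u := b)) j \<longleftrightarrow> (w(u := a)) i = (w(u := a)) j) \<and>
      (E ((v(u := b)) i) ((v(u := b)) j) \<longleftrightarrow> E' ((w(u := a)) i) ((w(u := a)) j))"
      using vw new new' loop unfolding same_atomic_type_def
      by (cases "i = u"; cases "j = u") simp_all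
  qed
qed

definition extends_two_point_maps ::
    "'a set \<Rightarrow> ('a \<Rightarrow> 'a \<Rightarrow> bool) \<Rightarrow> 'b set \<Rightarrow> ('b \<Rightarrow> 'b \<Rightarrow> bool) \<Rightarrow> bool" where
  "extends_two_point_maps D E D' E' \<longleftrightarrow>
     (\<forall>p\<in>D. \<forall>q\<in>D. \<forall>p'\<in>D'. \<forall>q'\<in>D'. (p = q \<longleftrightarrow> p' = q') \<and> (E p q \<longleftrightarrow> E' p' q') \<longrightarrow>
       (\<forall>b\<in>D. \<exists>a\<in>D'. (b = p \<longleftrightarrow> a = p') \<and> (b = q \<longleftrightarrow> a = q') \<and>
                       (E b p \<longleftrightarrow> E' a p') \<and> (E b q \<longleftrightarrow> E' a q')))"

lemma var_other_two: "\<exists>i j. \<forall>t :: var. t \<noteq> u \<longrightarrow> t = i \<or> t = j"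
proof -
  have "\<forall>t. t = Vx \<or> t = Vy \<or> t = Vz" by (metis var.exhaust)
  then show ?thesis by (cases u) blast+
qed

lemma same_atomic_type_forth:
  fixes v :: "var \<Rightarrow> 'a" and w :: "var \<Rightarrow> 'b"
  assumes ext: "extends_two_point_maps D E D' E'"
    and graphs: "symp E" "symp E'" "irreflp E" "irreflp E'"
    and v: "\<forall>t. v t \<in> D" and w: "\<forall>t. w t \<in> D'"
    and vw: "same_atomic_type E E' v w" and "b \<in> D"
  shows "\<exists>a\<in>D'. same_atomic_type E E' (v(u := b)) (w(u := a))"
proof -
  obtain i j :: var where other: "\<And>t. t \<noteq> u \<Longrightarrow> t = i \<or> t = j"
    using var_other_two by blast
  from vw have "(v i = v j \<longleftrightarrow> w i = w j) \<and> (E (v i) (v j) \<longleftrightarrow> E' (w i) (w j))"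
    unfolding same_atomic_type_def by blast
  then obtain a where "a \<in> D'"
    and a: "(b = v i \<longleftrightarrow> a = w i) \<and> (b = v j \<longleftrightarrow> a = w j) \<and>
            (E b (v i) \<longleftrightarrow> E' a (w i)) \<and> (E b (v j) \<longleftrightarrow> E' a (w j))"
    using ext[unfolded extends_two_point_maps_def, rule_format, of "v i" "v j" "w i" "w j" b]
      v w \<open>b \<in> D\<close> by blast
  have "(b = v t \<longleftrightarrow> a = w t) \<and> (E b (v t) \<longleftrightarrow> E' a (w t))" if "t \<noteq> u" for t
    using other[OF that] a by blast
  then have "same_atomic_type E E' (v(u := b)) (w(u := a))"
    by (rule same_atomic_type_update[OF vw graphs])
  with \<open>a \<in> D'\<close> show ?thesis by blast
qed

lemma exists_same_atomic_type:
  fixes v :: "var \<Rightarrow> 'a"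
  assumes ext: "extends_two_point_maps D E D' E'"
    and graphs: "symp E" "symp E'" "irreflp E" "irreflp E'"
    and "p' \<in> D'" and v: "\<forall>t. v t \<in> D"
  shows "\<exists>w. (\<forall>t. w t \<in> D') \<and> same_atomic_type E E' v w"
proof -
  note forth = same_atomic_type_forth[OF ext graphs]
  have "same_atomic_type E E' (\<lambda>_. v Vx) (\<lambda>_. p')"
    using graphs by (simp add: same_atomic_type_def irreflpD)
  then obtain a where "a \<in> D'"
    and Vy: "same_atomic_type E E' ((\<lambda>_. v Vx)(Vy := v Vy)) ((\<lambda>_. p')(Vy := a))"
    using forth[of "\<lambda>_. v Vx" "\<lambda>_. p'"] v \<open>p' \<in> D'\<close> by blast
  have "\<forall>t. ((\<lambda>_. v Vx)(Vy := v Vy)) t \<in> D" "\<forall>t. ((\<lambda>_. p')(Vy := a)) t \<in> D'"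
    using v \<open>p' \<in> D'\<close> \<open>a \<in> D'\<close> by simp_all
  with Vy obtain a' where "a' \<in> D'"
    and Vz: "same_atomic_type E E' ((\<lambda>_. v Vx)(Vy := v Vy, Vz := v Vz)) ((\<lambda>_. p')(Vy := a, Vz := a'))"
    using forth v by blast
  have "(\<lambda>_. v Vx)(Vy := v Vy, Vz := v Vz) = v"
  proof
    fix t show "((\<lambda>_. v Vx)(Vy := v Vy, Vz := v Vz)) t = v t" by (cases t) simp_all
  qed
  with Vz have "same_atomic_type E E' v ((\<lambda>_. p')(Vy := a, Vz := a'))" by simp
  moreover have "\<forall>t. ((\<lambda>_. p')(Vy := a, Vz := a')) t \<in> D'"
    using \<open>p' \<in> D'\<close> \<open>a \<in> D'\<close> \<open>a' \<in> D'\<close> by simp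
  ultimately show ?thesis by blast
qed

lemma square_pentagon_graphs: "symp sqT" "symp pentZ" "irreflp sqT" "irreflp pentZ"
  unfolding symp_def irreflp_on_def sqT_def pentZ_def by (auto simp: mod_Suc)

lemma square_extends_into_pentagon: "extends_two_point_maps sqQ sqT pentP pentZ"
proof -
  have Q: "sqQ = {0, 1, 2, 3}" and P: "pentP = {0, 1, 2, 3, 4}"
    by (auto simp: sqQ_def pentP_def)
  show ?thesis
    unfolding extends_two_point_maps_def sqT_def pentZ_def Q P ball_simps bex_simps by simp
qed

theorem lemma2:
  fixes \<theta> :: ufm
  assumes "\<forall>w :: var \<Rightarrow> nat. (\<forall>v. w v \<in> pentP) \<longrightarrow> sat pentP pentZ \<theta> w"
  shows "\<forall>v :: var \<Rightarrow> nat. (\<forall>u. v u \<in> sqQ) \<longrightarrow> sat sqQ sqT \<theta> v"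
proof (intro allI impI)
  fix v :: "var \<Rightarrow> nat" assume v: "\<forall>u. v u \<in> sqQ"
  let ?S = "\<lambda>v w. (\<forall>t. v t \<in> sqQ) \<and> (\<forall>t. w t \<in> pentP) \<and> same_atomic_type sqT pentZ v w"
  note ext = square_extends_into_pentagon and graphs = square_pentagon_graphs
  have "0 \<in> pentP" by (simp add: pentP_def)
  then obtain w where S: "?S v w"
    using exists_same_atomic_type[OF ext graphs _ v] v by blast
  show "sat sqQ sqT \<theta> v"
  proof (rule sat_transfer_forth[where S = ?S and D' = pentP and E' = pentZ])
    show "?S v w" by (rule S)
    with assms show "sat pentP pentZ \<theta> w" by blast
  next
    fix v' w' :: "var \<Rightarrow> nat" assume "?S v' w'"
    then show "same_atomic_type sqT pentZ v' w'" by blast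
  next
    fix v' w' :: "var \<Rightarrow> nat" and u b assume S': "?S v' w'" and "b \<in> sqQ"
    then obtain a where "a \<in> pentP" "same_atomic_type sqT pentZ (v'(u := b)) (w'(u := a))"
      using same_atomic_type_forth[OF ext graphs] by blast
    with S' \<open>b \<in> sqQ\<close> show "\<exists>a\<in>pentP. ?S (v'(u := b)) (w'(u := a))"
      by (intro bexI[of _ a]) simp_all
  qed
qed

end
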